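(* Let $\nu\ge 1$ be an integer and $M\ge1$. For $c\in(0,1)$ let $\chi^2_\nu(c)$ denote the $c$-quantile of the chi-squared distribution with $\nu$ degrees of freedom. Let $K_1^*,\dots,K_M^*$ be real numbers and define, for each $i$, $$c_i^0=\sup\{c\in(0,1)\;:\;K_i^*>\chi^2_\nu(c)\},$$ and, with $\overline{K^*}=\sum_{i=1}^M K_i^*$, $$\overline{c^0}=\sup\Big\{c\in(0,1)\;:\;\overline{K^*}>\sum_{i=1}^M\chi^2_\nu(c)\Big\}.$$ Then $\overline{c^0}\ \ge\ \min_i c_i^0$.
   Context: Interpretation: there are $M$ computing nodes; $K_i^*$ is the observed value of a chi-squared goodness-of-fit test statistic on node $i$ (with $\nu=t-w-1$ degrees of freedom, $t$ the number of cells and $w$ the number of fitted parameters), $c_i^0$ is the confidence level of the fitted local distribution on node $i$, the global test statistic is the sum $\overline{K}=\sum_i K_i$ of the local ones, and $\overline{c^0}$ is the global confidence level. Suprema are taken over the indicated subsets of $(0,1)$. *)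

theory Defs
  imports "HOL-Probability.Probability"
begin

definition chi2_density :: "nat \<Rightarrow> real \<Rightarrow> real" where
  "chi2_density \<nu> x =
     (if x > 0 then x powr (real \<nu> / 2 - 1) * exp (- x / 2)
                    / (2 powr (real \<nu> / 2) * Gamma (real \<nu> / 2))
      else 0)"

definition chi2_cdf :: "nat \<Rightarrow> real \<Rightarrow> real" where
  "chi2_cdf \<nu> x = (LINT t:{..x}|lborel. chi2_density \<nu> t)"

definition chi2_quantile :: "nat \<Rightarrow> real \<Rightarrow> real" where
  "chi2_quantile \<nu> c = Inf {x. chi2_cdf \<nu> x \<ge> c}"

definition sup01 :: "real set \<Rightarrow> real" where
  "sup01 S = (if S = {} then 0 else Sup S)"

definition local_conf :: "nat \<Rightarrow> real \<Rightarrow> real" where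
  "local_conf \<nu> Kstar = sup01 {c \<in> {0<..<1}. Kstar > chi2_quantile \<nu> c}"

definition global_conf :: "nat \<Rightarrow> nat \<Rightarrow> (nat \<Rightarrow> real) \<Rightarrow> real" where
  "global_conf \<nu> M Kstar =
     sup01 {c \<in> {0<..<1}. (\<Sum>i=1..M. Kstar i) > (\<Sum>i=1..M. chi2_quantile \<nu> c)}"

end

theory Submission
  imports Defs
begin

text \<open>Only monotonicity of the quantile \<open>q = \<chi>\<^sup>2\<^sub>\<nu>\<close> on (0,1) matters: a level
  \<open>c\<close> below every local confidence level lies below some \<open>c'\<close> with
  \<open>q c \<le> q c' < K\<^sub>i\<^sup>*\<close>, and summing these strict inequalities over the nodes puts
  \<open>c\<close> into the set defining the global confidence level. The quantile is
  monotone once the CDF tends to 1, i.e. once the density integrates to 1,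
  which is Euler's Gamma integral after the substitution \<open>t = x/2\<close>.\<close>

lemma chi2_density_measurable [measurable]: "chi2_density \<nu> \<in> borel_measurable borel"
  unfolding chi2_density_def by measurable

lemma chi2_density_nonneg:
  assumes "\<nu> \<ge> 1"
  shows "chi2_density \<nu> x \<ge> 0"
  using assms unfolding chi2_density_def
  by (auto intro!: divide_nonneg_pos mult_pos_pos Gamma_real_pos)

lemma chi2_density_nonpos: "x \<le> 0 \<Longrightarrow> chi2_density \<nu> x = 0"
  unfolding chi2_density_def by auto

lemma Gamma_integrand_half_eq_chi2_density:
  assumes "\<nu> \<ge> 1"
  shows "indicator {0..} (x/2) * (x/2) powr (real \<nu>/2 - 1) / exp (x/2)
     = 2 * Gamma (real \<nu> / 2) * chi2_density \<nu> x"
proof (cases "x > 0")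
  case True
  have "Gamma (real \<nu> / 2) > 0" using assms by (intro Gamma_real_pos) auto
  moreover have "(x/2) powr (real \<nu>/2 - 1) = x powr (real \<nu>/2 - 1) / 2 powr (real \<nu>/2 - 1)"
    using True by (simp add: powr_divide)
  moreover have "2 powr (real \<nu>/2 - 1) = 2 powr (real \<nu>/2) / 2"
    by (simp add: powr_diff)
  ultimately have "(x/2) powr (real \<nu>/2 - 1) = 2 * x powr (real \<nu>/2 - 1) / 2 powr (real \<nu>/2)"
    by simp
  with True \<open>Gamma (real \<nu> / 2) > 0\<close> show ?thesis
    unfolding chi2_density_def by (simp add: exp_minus field_simps)
next
  case False
  then show ?thesis unfolding chi2_density_def by (cases "x = 0") auto
qed

lemma nn_integral_chi2_density:
  assumes "\<nu> \<ge> 1"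
  shows "(\<integral>\<^sup>+x. ennreal (chi2_density \<nu> x) \<partial>lborel) = 1"
proof -
  define s where "s = real \<nu> / 2"
  have "s > 0" using assms by (simp add: s_def)
  define G where "G = Gamma s"
  have G: "G > 0" using \<open>s > 0\<close> by (simp add: G_def Gamma_real_pos)
  have "ennreal G = (\<integral>\<^sup>+t. ennreal (indicator {0..} t * t powr (s - 1) / exp t) \<partial>lborel)"
    using Gamma_conv_nn_integral_real[OF \<open>s > 0\<close>] by (simp add: G_def)
  also have "\<dots> = ennreal (1/2) * (\<integral>\<^sup>+x. ennreal (indicator {0..} (0 + 1/2 * x)
                    * (0 + 1/2 * x) powr (s - 1) / exp (0 + 1/2 * x)) \<partial>lborel)"
    using nn_integral_real_affine[where c="1/2" and t=0
        and f="\<lambda>t. ennreal (indicator {0..} t * t powr (s - 1) / exp t)"] by simp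
  also have "\<dots> = ennreal (1/2) * (\<integral>\<^sup>+x. ennreal (2 * G) * ennreal (chi2_density \<nu> x) \<partial>lborel)"
    using Gamma_integrand_half_eq_chi2_density[OF assms] G chi2_density_nonneg[OF assms]
    by (simp add: s_def G_def ennreal_mult)
  also have "\<dots> = ennreal (1/2) * ennreal (2 * G) * (\<integral>\<^sup>+x. ennreal (chi2_density \<nu> x) \<partial>lborel)"
    by (simp add: nn_integral_cmult mult.assoc)
  also have "ennreal (1/2) * ennreal (2 * G) = ennreal G"
    using G ennreal_mult[of "1/2" "2*G"] by simp
  finally show ?thesis
    using G ennreal_mult_cancel_left[of "ennreal G" 1] by simp
qed

lemma integrable_chi2_density: "\<nu> \<ge> 1 \<Longrightarrow> integrable lborel (chi2_density \<nu>)"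
  by (rule integrableI_nn_integral_finite[where x=1])
     (auto simp: nn_integral_chi2_density chi2_density_nonneg)

lemma integral_chi2_density: "\<nu> \<ge> 1 \<Longrightarrow> integral\<^sup>L lborel (chi2_density \<nu>) = 1"
  by (subst integral_eq_nn_integral) (auto simp: nn_integral_chi2_density chi2_density_nonneg)

lemma chi2_cdf_nonpos:
  assumes "x \<le> 0"
  shows "chi2_cdf \<nu> x = 0"
proof -
  have "(\<lambda>t. indicator {..x} t *\<^sub>R chi2_density \<nu> t) = (\<lambda>t. 0)"
    using assms by (auto simp: chi2_density_nonpos indicator_def)
  then show ?thesis unfolding chi2_cdf_def set_lebesgue_integral_def by simp
qed

lemma chi2_cdf_eq_integral_from_0:
  assumes "b \<ge> 0"
  shows "chi2_cdf \<nu> b = (LINT t:{0..b}|lborel. chi2_density \<nu> t)"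
proof -
  have "(\<lambda>t. indicator {..b} t *\<^sub>R chi2_density \<nu> t)
      = (\<lambda>t. indicator {0..b} t *\<^sub>R chi2_density \<nu> t)"
    using assms by (intro ext) (auto simp: chi2_density_nonpos indicator_def)
  then show ?thesis unfolding chi2_cdf_def set_lebesgue_integral_def by simp
qed

lemma chi2_cdf_tendsto_1:
  assumes "\<nu> \<ge> 1"
  shows "(chi2_cdf \<nu> \<longlongrightarrow> 1) at_top"
proof -
  have "(\<lambda>t. indicator {0..} t *\<^sub>R chi2_density \<nu> t) = chi2_density \<nu>"
    by (intro ext) (auto simp: chi2_density_nonpos indicator_def)
  then have integrable: "set_integrable lborel {0..} (chi2_density \<nu>)"
    and total: "(LINT t:{0..}|lborel. chi2_density \<nu> t) = 1"
    using integrable_chi2_density[OF assms] integral_chi2_density[OF assms]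
    by (simp_all add: set_integrable_def set_lebesgue_integral_def)
  then have "((\<lambda>b. LINT t:{0..b}|lborel. chi2_density \<nu> t) \<longlongrightarrow> 1) at_top"
    using tendsto_set_lebesgue_integral_at_top[OF _ integrable] total by simp
  then show ?thesis
    by (rule Lim_transform_eventually)
       (auto simp: chi2_cdf_eq_integral_from_0 eventually_at_top_linorder intro!: exI[of _ 0])
qed

lemma chi2_cdf_exceeds:
  assumes "\<nu> \<ge> 1" "c < 1"
  shows "\<exists>x. chi2_cdf \<nu> x > c"
  using eventually_happens'[OF _ order_tendstoD(1)[OF chi2_cdf_tendsto_1[OF assms(1)] assms(2)]]
  by auto

lemma chi2_quantile_mono_on:
  assumes "\<nu> \<ge> 1"
  shows "mono_on {0<..<1} (chi2_quantile \<nu>)"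
proof (rule mono_onI)
  fix c c' :: real assume c: "c \<in> {0<..<1}" "c' \<in> {0<..<1}" "c \<le> c'"
  show "chi2_quantile \<nu> c \<le> chi2_quantile \<nu> c'"
    unfolding chi2_quantile_def
  proof (rule cInf_superset_mono)
    show "{x. c' \<le> chi2_cdf \<nu> x} \<noteq> {}"
      using chi2_cdf_exceeds[OF assms, of c'] c by (auto intro: less_imp_le)
    show "bdd_below {x. c \<le> chi2_cdf \<nu> x}"
    proof (rule bdd_belowI[of _ 0])
      fix x assume "x \<in> {x. c \<le> chi2_cdf \<nu> x}"
      then show "0 \<le> x" using chi2_cdf_nonpos[of x \<nu>] c(1) by (cases "x \<le> 0") auto
    qed
    show "{x. c' \<le> chi2_cdf \<nu> x} \<subseteq> {x. c \<le> chi2_cdf \<nu> x}"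
      using c by auto
  qed
qed

lemma sup01_nonneg: "S \<subseteq> {0<..<1} \<Longrightarrow> sup01 S \<ge> 0"
  unfolding sup01_def
  by (auto intro!: cSup_upper2 bdd_aboveI[of _ 1] simp: subset_eq less_imp_le)

lemma sup01_upper: "S \<subseteq> {0<..<1} \<Longrightarrow> c \<in> S \<Longrightarrow> c \<le> sup01 S"
  unfolding sup01_def by (auto intro!: cSup_upper bdd_aboveI[of _ 1])

lemma less_sup01_iff:
  assumes "S \<subseteq> {0<..<1}" "c \<ge> 0"
  shows "c < sup01 S \<longleftrightarrow> (\<exists>x\<in>S. c < x)"
proof (cases "S = {}")
  case False
  moreover have "bdd_above S" using assms(1) by (intro bdd_aboveI[of _ 1]) auto
  ultimately show ?thesis by (simp add: sup01_def less_cSup_iff)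
qed (use assms(2) in \<open>simp add: sup01_def\<close>)

lemma less_sup01_level_imp:
  fixes q :: "real \<Rightarrow> 'a::order"
  assumes "mono_on {0<..<1} q" "0 < c" "c < sup01 {x \<in> {0<..<1}. k > q x}"
  shows "c < 1" "q c < k"
proof -
  obtain x where x: "x \<in> {0<..<1}" "q x < k" "c < x"
    using assms(2,3) less_sup01_iff[of "{x \<in> {0<..<1}. k > q x}" c] by fastforce
  then show "c < 1" by simp
  have "q c \<le> q x"
    using x assms(2) by (intro mono_onD[OF assms(1)]) auto
  then show "q c < k" using x(2) by (rule order.strict_trans1)
qed

lemma Min_sup01_levels_le_sup01_sum_level:
  fixes q :: "real \<Rightarrow> real" and K :: "'i \<Rightarrow> real"
  assumes "mono_on {0<..<1} q" "finite I" "I \<noteq> {}"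
  shows "Min ((\<lambda>i. sup01 {c \<in> {0<..<1}. K i > q c}) ` I)
           \<le> sup01 {c \<in> {0<..<1}. (\<Sum>i\<in>I. K i) > (\<Sum>i\<in>I. q c)}"
    (is "?m \<le> sup01 ?G")
proof (cases "?m \<le> 0")
  case True
  then show ?thesis using sup01_nonneg[of ?G] by force
next
  case False
  show ?thesis
  proof (rule dense_le_bounded)
    show "0 < ?m" using False by simp
    fix c assume c: "0 < c" "c < ?m"
    have "c < sup01 {x \<in> {0<..<1}. K i > q x}" if "i \<in> I" for i
      using c that assms(2) by (auto dest: order.strict_trans2[OF _ Min_le])
    note level = less_sup01_level_imp[OF assms(1) c(1) this]
    have "(\<Sum>i\<in>I. q c) < (\<Sum>i\<in>I. K i)"
      using assms(2,3) level(2) by (rule sum_strict_mono)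
    moreover have "c < 1" using level(1) assms(3) by blast
    ultimately have "c \<in> ?G" using c(1) by simp
    then show "c \<le> sup01 ?G" by (rule sup01_upper[rotated]) auto
  qed
qed

theorem theorem2:
  fixes \<nu> M :: nat and Kstar :: "nat \<Rightarrow> real"
  assumes "\<nu> \<ge> 1" and "M \<ge> 1"
  shows "global_conf \<nu> M Kstar \<ge> Min ((\<lambda>i. local_conf \<nu> (Kstar i)) ` {1..M})"
  using Min_sup01_levels_le_sup01_sum_level[OF chi2_quantile_mono_on[OF assms(1)], of "{1..M}" Kstar]
    assms(2)
  unfolding global_conf_def local_conf_def by simp

end
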